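(* Let $R$ be a commutative ring with nonzero identity, $M$ an $R$-module, $\delta$ an expansion of ideals of $R$, $I$ a proper ideal of $R$ and $N$ a submodule of $M$ with $IM\subseteq N$. Define $\delta_{(+)}$ on ideals of the idealization $R(+)M$ by $\delta_{(+)}(J(+)L)=\delta(J)(+)M$. Then $I$ is a $\delta$-$n$-ideal of $R$ if and only if $I(+)N$ is a $\delta_{(+)}$-$n$-ideal of $R(+)M$.
   Context: An expansion of ideals of a ring $R$ is a map $\delta$ from the set of ideals of $R$ to itself such that $I\subseteq\delta(I)$ for every ideal $I$, and $\delta(I)\subseteq\delta(J)$ whenever $I\subseteq J$. $\sqrt{0}$ denotes the nilradical of the ring in question. Given an expansion $\delta$ of ideals of a ring $R$, a proper ideal $I$ of $R$ is a $\delta$-$n$-ideal if whenever $a,b\in R$ with $ab\in I$ and $a\notin\sqrt{0}$, then $b\in\delta(I)$. The idealization $R(+)M=R\times M$ has componentwise addition and multiplication $(r_1,m_1)(r_2,m_2)=(r_1r_2,r_1m_2+r_2m_1)$; for an ideal $J$ of $R$ and submodule $L$ of $M$, $J(+)L=J\times L$ is an ideal of $R(+)M$ iff $JM\subseteq L$, and $\sqrt{0_{R(+)M}}=\sqrt{0_R}(+)M$. *)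

theory Defs
  imports Complex_Main
begin

definition ring_ideal :: "'a::comm_ring_1 set \<Rightarrow> bool" where
  "ring_ideal I \<longleftrightarrow> 0 \<in> I \<and> (\<forall>x\<in>I. \<forall>y\<in>I. x + y \<in> I) \<and> (\<forall>r. \<forall>x\<in>I. r * x \<in> I)"

definition nilrad :: "'a::comm_ring_1 set" where
  "nilrad = {x. \<exists>n. x ^ n = 0}"

definition expansion :: "('a::comm_ring_1 set \<Rightarrow> 'a set) \<Rightarrow> bool" where
  "expansion \<delta> \<longleftrightarrow>
     (\<forall>I. ring_ideal I \<longrightarrow> ring_ideal (\<delta> I) \<and> I \<subseteq> \<delta> I) \<and>
     (\<forall>I J. ring_ideal I \<longrightarrow> ring_ideal J \<longrightarrow> I \<subseteq> J \<longrightarrow> \<delta> I \<subseteq> \<delta> J)"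

definition delta_n_ideal :: "('a::comm_ring_1 set \<Rightarrow> 'a set) \<Rightarrow> 'a set \<Rightarrow> bool" where
  "delta_n_ideal \<delta> I \<longleftrightarrow> ring_ideal I \<and> I \<noteq> UNIV \<and>
     (\<forall>a b. a * b \<in> I \<longrightarrow> a \<notin> nilrad \<longrightarrow> b \<in> \<delta> I)"

definition idz_add :: "'a::comm_ring_1 \<times> 'm::ab_group_add \<Rightarrow> 'a \<times> 'm \<Rightarrow> 'a \<times> 'm" where
  "idz_add x y = (fst x + fst y, snd x + snd y)"

definition idz_mult :: "('a::comm_ring_1 \<Rightarrow> 'm::ab_group_add \<Rightarrow> 'm) \<Rightarrow> 'a \<times> 'm \<Rightarrow> 'a \<times> 'm \<Rightarrow> 'a \<times> 'm" where
  "idz_mult s x y = (fst x * fst y, s (fst x) (snd y) + s (fst y) (snd x))"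

definition idz_pow :: "('a::comm_ring_1 \<Rightarrow> 'm::ab_group_add \<Rightarrow> 'm) \<Rightarrow> 'a \<times> 'm \<Rightarrow> nat \<Rightarrow> 'a \<times> 'm" where
  "idz_pow s x n = (idz_mult s x ^^ n) (1, 0)"

definition idz_ideal :: "('a::comm_ring_1 \<Rightarrow> 'm::ab_group_add \<Rightarrow> 'm) \<Rightarrow> ('a \<times> 'm) set \<Rightarrow> bool" where
  "idz_ideal s K \<longleftrightarrow> (0, 0) \<in> K \<and> (\<forall>x\<in>K. \<forall>y\<in>K. idz_add x y \<in> K) \<and>
     (\<forall>z. \<forall>x\<in>K. idz_mult s z x \<in> K)"

definition idz_nilrad :: "('a::comm_ring_1 \<Rightarrow> 'm::ab_group_add \<Rightarrow> 'm) \<Rightarrow> ('a \<times> 'm) set" where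
  "idz_nilrad s = {x. \<exists>n. idz_pow s x n = (0, 0)}"

definition idz_delta_n_ideal ::
  "('a::comm_ring_1 \<Rightarrow> 'm::ab_group_add \<Rightarrow> 'm) \<Rightarrow> (('a \<times> 'm) set \<Rightarrow> ('a \<times> 'm) set) \<Rightarrow> ('a \<times> 'm) set \<Rightarrow> bool" where
  "idz_delta_n_ideal s \<Delta> K \<longleftrightarrow> idz_ideal s K \<and> K \<noteq> UNIV \<and>
     (\<forall>x y. idz_mult s x y \<in> K \<longrightarrow> x \<notin> idz_nilrad s \<longrightarrow> y \<in> \<Delta> K)"

text \<open>delta_(+)(J(+)L) = delta(J)(+)M; extended to arbitrary subsets via the first projection
  (for K = J(+)L with L nonempty, fst ` K = J).\<close>
definition delta_plus :: "('a set \<Rightarrow> 'a set) \<Rightarrow> ('a \<times> 'm) set \<Rightarrow> ('a \<times> 'm) set" where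
  "delta_plus \<delta> K = \<delta> (fst ` K) \<times> UNIV"

end

theory Submission
  imports Defs
begin

text \<open>In \<open>R(+)M\<close> the \<open>n\<close>-th power of \<open>(r, m)\<close> is \<open>(r ^ n, n r ^ (n - 1) m)\<close>, so an element
  is nilpotent exactly when its first component is; the first component of a product is the
  product of the first components; and \<open>\<delta>(+)(I(+)N) = \<delta>(I)(+)M\<close> constrains first components
  only. Hence the condition for \<open>I(+)N\<close> reduces to the one for \<open>I\<close>, the converse direction
  using the embedding \<open>a \<mapsto> (a, 0)\<close>.\<close>

lemma idz_pow_Suc: "idz_pow s x (Suc n) = idz_mult s x (idz_pow s x n)"
  by (simp add: idz_pow_def)

lemma fst_idz_pow [simp]: "fst (idz_pow s x n) = fst x ^ n"
  by (induct n) (auto simp: idz_pow_def idz_mult_def)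

lemma fst_idz_mult [simp]: "fst (idz_mult s x y) = fst x * fst y"
  by (simp add: idz_mult_def)

lemma delta_plus_Times: "N \<noteq> {} \<Longrightarrow> delta_plus \<delta> (I \<times> N) = \<delta> I \<times> UNIV"
  by (simp add: delta_plus_def)

context module
begin

lemma idz_mult_zero_snd [simp]: "idz_mult scale (a, 0) (b, 0) = (a * b, 0)"
  by (simp add: idz_mult_def)

lemma snd_idz_pow:
  "snd (idz_pow scale x (Suc n)) = scale (of_nat (Suc n) * fst x ^ n) (snd x)"
proof (induct n)
  case 0
  then show ?case by (simp add: idz_pow_def idz_mult_def)
next
  case (Suc n)
  have "snd (idz_pow scale x (Suc (Suc n)))
      = scale (fst x) (scale (of_nat (Suc n) * fst x ^ n) (snd x)) + scale (fst x ^ Suc n) (snd x)"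
    using Suc.hyps by (simp add: idz_pow_Suc idz_mult_def)
  also have "\<dots> = scale (of_nat (Suc (Suc n)) * fst x ^ Suc n) (snd x)"
    by (simp add: scale_scale flip: scale_left_distrib) (simp add: algebra_simps)
  finally show ?case .
qed

lemma idz_nilrad_iff: "x \<in> idz_nilrad scale \<longleftrightarrow> fst x \<in> nilrad"
proof
  assume "x \<in> idz_nilrad scale"
  then obtain n where "idz_pow scale x n = (0, 0)"
    by (auto simp: idz_nilrad_def)
  then have "fst x ^ n = 0"
    using fst_idz_pow[of scale x n] by simp
  then show "fst x \<in> nilrad"
    by (auto simp: nilrad_def)
next
  assume "fst x \<in> nilrad"
  then obtain n where n: "fst x ^ n = 0"
    by (auto simp: nilrad_def)
  have "idz_pow scale x (Suc n) = (0, 0)"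
    using n by (simp add: prod_eq_iff snd_idz_pow)
  then show "x \<in> idz_nilrad scale"
    by (auto simp: idz_nilrad_def)
qed

lemma idz_ideal_Times:
  assumes "ring_ideal I" and "subspace N" and "\<forall>i\<in>I. \<forall>m. scale i m \<in> N"
  shows "idz_ideal scale (I \<times> N)"
  unfolding idz_ideal_def
proof (intro conjI ballI allI)
  show "(0, 0) \<in> I \<times> N"
    using assms(1,2) by (simp add: ring_ideal_def subspace_0)
next
  fix x y
  assume "x \<in> I \<times> N" "y \<in> I \<times> N"
  then show "idz_add x y \<in> I \<times> N"
    using assms(1,2) by (auto simp: idz_add_def ring_ideal_def intro: subspace_add)
next
  fix z x
  assume x: "x \<in> I \<times> N"
  have "scale (fst z) (snd x) \<in> N" "scale (fst x) (snd z) \<in> N"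
    using x assms(2,3) by (auto intro: subspace_scale)
  then show "idz_mult scale z x \<in> I \<times> N"
    using x assms(1,2) by (auto simp: idz_mult_def ring_ideal_def intro: subspace_add)
qed

lemma idz_delta_n_ideal_TimesI:
  assumes "delta_n_ideal \<delta> I" and "idz_ideal scale (I \<times> N)" and "N \<noteq> {}"
  shows "idz_delta_n_ideal scale (delta_plus \<delta>) (I \<times> N)"
  unfolding idz_delta_n_ideal_def delta_plus_Times[OF \<open>N \<noteq> {}\<close>]
proof (intro conjI allI impI)
  show "I \<times> N \<noteq> UNIV"
    using assms(1) by (auto simp: delta_n_ideal_def)
next
  fix x y
  assume "idz_mult scale x y \<in> I \<times> N" "x \<notin> idz_nilrad scale"
  then have "fst x * fst y \<in> I" "fst x \<notin> nilrad"
    by (auto simp: mem_Times_iff idz_nilrad_iff)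
  then show "y \<in> \<delta> I \<times> UNIV"
    using assms(1) by (auto simp: delta_n_ideal_def mem_Times_iff)
qed (fact assms(2))

lemma delta_n_ideal_of_idz_Times:
  assumes "idz_delta_n_ideal scale (delta_plus \<delta>) (I \<times> N)"
    and "ring_ideal I" and "I \<noteq> UNIV" and "0 \<in> N"
  shows "delta_n_ideal \<delta> I"
  unfolding delta_n_ideal_def
proof (intro conjI allI impI assms(2,3))
  fix a b
  assume "a * b \<in> I" "a \<notin> nilrad"
  then have "idz_mult scale (a, 0) (b, 0) \<in> I \<times> N" "(a, 0) \<notin> idz_nilrad scale"
    using \<open>0 \<in> N\<close> by (simp_all add: idz_nilrad_iff)
  then have "(b, 0) \<in> delta_plus \<delta> (I \<times> N)"
    using assms(1) unfolding idz_delta_n_ideal_def by metis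
  moreover have "N \<noteq> {}"
    using \<open>0 \<in> N\<close> by blast
  ultimately show "b \<in> \<delta> I"
    by (simp add: delta_plus_Times)
qed

end

theorem proposition2p26:
  fixes s :: "'a::comm_ring_1 \<Rightarrow> 'm::ab_group_add \<Rightarrow> 'm"
    and \<delta> :: "'a set \<Rightarrow> 'a set"
    and I :: "'a set" and N :: "'m set"
  assumes "module s"
    and "expansion \<delta>"
    and "ring_ideal I" and "I \<noteq> UNIV"
    and "module.subspace s N"
    and "\<forall>i\<in>I. \<forall>m. s i m \<in> N"
  shows "delta_n_ideal \<delta> I \<longleftrightarrow> idz_delta_n_ideal s (delta_plus \<delta>) (I \<times> N)"
proof -
  interpret module s by fact
  have "0 \<in> N"
    using assms(5) by (rule subspace_0)
  moreover have "idz_ideal s (I \<times> N)"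
    using assms(3,5,6) by (rule idz_ideal_Times)
  ultimately show ?thesis
    using assms(3,4) idz_delta_n_ideal_TimesI delta_n_ideal_of_idz_Times by blast
qed

end
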